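(* Let $\Gamma$ and $\Gamma'$ be connected strongly regular graphs with the same parameters $(n,k,a,c)$, with vertex sets $X$, $X'$, and let $x\in X$, $x'\in X'$. Let $i\in\{1,2\}$. Let $v\in E^*_i(x)V$ be an eigenvector of $E^*_i(x)AE^*_i(x)$ with eigenvalue $\lambda$ such that $\langle \mathbf{1},v\rangle=0$, and let $v'\in E'^*_i(x')V'$ be an eigenvector of $E'^*_i(x')A'E'^*_i(x')$ with eigenvalue $\lambda'$ such that $\langle \mathbf{1},v'\rangle=0$. Then $\lambda=\lambda'$ if and only if there exists a $\mathbb{C}$-linear bijection $\rho:T(x)v\to T'(x')v'$ with $\rho Aw=A'\rho w$ and $\rho E^*_j(x)w=E'^*_j(x')\rho w$ for all $w\in T(x)v$ and all $j$.
   Context: A strongly regular graph with parameters $(n,k,a,c)$ is a $k$-regular graph on $n$ vertices in which every pair of adjacent vertices has exactly $a$ common neighbours and every pair of distinct non-adjacent vertices has exactly $c$ common neighbours. For $\Gamma$ with vertex set $X$, distance $\partial$ and diameter $D$, let $A$ be its adjacency matrix, $V=\mathbb{C}^X$ with the standard Hermitian inner product $\langle u,w\rangle=u^t\overline{w}$, $\mathbf{1}$ the all-ones vector, and $E^*_j(x)$ ($0\le j\le D$) the diagonal matrix with $(E^*_j(x))_{yy}=1$ if $\partial(x,y)=j$ and $0$ otherwise. The Terwilliger algebra $T(x)$ is the subalgebra of $\mathrm{Mat}_X(\mathbb{C})$ generated by $A,E^*_0(x),\dots,E^*_D(x)$, and $T(x)v=\{Bv:B\in T(x)\}$. The same notation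 with primes is used for $\Gamma'$. *)

theory Defs
  imports "HOL-Analysis.Analysis"
begin

definition simple_graph :: "('n::finite \<Rightarrow> 'n \<Rightarrow> bool) \<Rightarrow> bool" where
  "simple_graph adj \<longleftrightarrow> (\<forall>x y. adj x y \<longleftrightarrow> adj y x) \<and> (\<forall>x. \<not> adj x x)"

definition connected_graph :: "('n::finite \<Rightarrow> 'n \<Rightarrow> bool) \<Rightarrow> bool" where
  "connected_graph adj \<longleftrightarrow> (\<forall>x y. adj\<^sup>*\<^sup>* x y)"

definition strongly_regular ::
  "('n::finite \<Rightarrow> 'n \<Rightarrow> bool) \<Rightarrow> nat \<Rightarrow> nat \<Rightarrow> nat \<Rightarrow> nat \<Rightarrow> bool" where
  "strongly_regular adj n k a c \<longleftrightarrow>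
     simple_graph adj \<and> CARD('n) = n \<and>
     (\<forall>x. card {y. adj x y} = k) \<and>
     (\<forall>x y. adj x y \<longrightarrow> card {z. adj x z \<and> adj y z} = a) \<and>
     (\<forall>x y. x \<noteq> y \<and> \<not> adj x y \<longrightarrow> card {z. adj x z \<and> adj y z} = c)"

definition graph_dist :: "('n::finite \<Rightarrow> 'n \<Rightarrow> bool) \<Rightarrow> 'n \<Rightarrow> 'n \<Rightarrow> nat" where
  "graph_dist adj x y = (LEAST m. (adj ^^ m) x y)"

definition diameter :: "('n::finite \<Rightarrow> 'n \<Rightarrow> bool) \<Rightarrow> nat" where
  "diameter adj = Max {graph_dist adj x y | x y. True}"

definition adj_matrix :: "('n::finite \<Rightarrow> 'n \<Rightarrow> bool) \<Rightarrow> complex^'n^'n" where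
  "adj_matrix adj = (\<chi> y z. if adj y z then 1 else 0)"

definition dual_idem :: "('n::finite \<Rightarrow> 'n \<Rightarrow> bool) \<Rightarrow> 'n \<Rightarrow> nat \<Rightarrow> complex^'n^'n" where
  "dual_idem adj x j = (\<chi> y z. if y = z \<and> graph_dist adj x y = j then 1 else 0)"

inductive_set terwilliger :: "('n::finite \<Rightarrow> 'n \<Rightarrow> bool) \<Rightarrow> 'n \<Rightarrow> (complex^'n^'n) set"
  for adj x where
  gen_A: "adj_matrix adj \<in> terwilliger adj x"
| gen_E: "j \<le> diameter adj \<Longrightarrow> dual_idem adj x j \<in> terwilliger adj x"
| one: "mat 1 \<in> terwilliger adj x"
| add: "B \<in> terwilliger adj x \<Longrightarrow> C \<in> terwilliger adj x \<Longrightarrow> B + C \<in> terwilliger adj x"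
| smult: "B \<in> terwilliger adj x \<Longrightarrow> (\<chi> i j. s * B $ i $ j) \<in> terwilliger adj x"
| mult: "B \<in> terwilliger adj x \<Longrightarrow> C \<in> terwilliger adj x \<Longrightarrow> B ** C \<in> terwilliger adj x"

definition T_module :: "('n::finite \<Rightarrow> 'n \<Rightarrow> bool) \<Rightarrow> 'n \<Rightarrow> complex^'n \<Rightarrow> (complex^'n) set" where
  "T_module adj x v = {B *v v | B. B \<in> terwilliger adj x}"

definition herm_inner :: "complex^'n::finite \<Rightarrow> complex^'n \<Rightarrow> complex" where
  "herm_inner u w = (\<Sum>y\<in>UNIV. u $ y * cnj (w $ y))"

end

theory Submission
  imports Defs
begin

text \<open>In a connected strongly regular graph every vertex lies at distance at most 2 from x,
  so X is the disjoint union of {x}, the first layer and the second layer. For v as in the theorem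
  put w = A v - \<lambda> v. Since v sums to 0, (A v)(x) = 0, and w is the part of A v lying in the other
  layer E*_{3-i}(x)V; in particular w is orthogonal to v. The identity
  A^2 = (k - c) I + (a - c) A + c J then gives A w = f v + (a - c - \<lambda>) w with
  f = k - c + (a - c) \<lambda> - \<lambda>^2, so T(x)v is spanned by v and w, and w = 0 exactly when f = 0.
  In the frame v, w the actions of A and of all E*_j(x) are given by matrices depending only
  on k, a, c, i and \<lambda>; hence equal eigenvalues yield the isomorphism \<alpha> v + \<beta> w \<mapsto> \<alpha> v' + \<beta> w'.
  Conversely, every vector of T'(x')v' fixed by E'*_i(x') is a multiple of v', so an isomorphism
  sends v to a \<lambda>'-eigenvector of E'*_i A' E'*_i, which is also a \<lambda>-eigenvector.\<close>

lemma matrix_vector_mult_smult: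
  fixes M :: "'a::comm_semiring_1^'n::finite^'m"
  shows "M *v (s *s u) = s *s (M *v u)"
  by (simp add: vec_eq_iff matrix_vector_mult_def sum_distrib_left algebra_simps)

lemma smult_matrix_vector_mult:
  fixes B :: "'a::comm_semiring_1^'n::finite^'m"
  shows "(\<chi> i j. s * B $ i $ j) *v u = s *s (B *v u)"
  by (simp add: vec_eq_iff matrix_vector_mult_def sum_distrib_left algebra_simps)

lemma matrix_vector_mult_lincomb:
  fixes M :: "'a::comm_semiring_1^'n::finite^'m"
  shows "M *v (\<alpha> *s p + \<beta> *s q) = \<alpha> *s (M *v p) + \<beta> *s (M *v q)"
  by (simp add: matrix_vector_right_distrib matrix_vector_mult_smult)

lemma herm_inner_add_left: "herm_inner (u + w) z = herm_inner u z + herm_inner w z"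
  by (simp add: herm_inner_def algebra_simps sum.distrib)

lemma herm_inner_diff_left: "herm_inner (u - w) z = herm_inner u z - herm_inner w z"
  by (simp add: herm_inner_def algebra_simps sum_subtractf)

lemma herm_inner_smult_left: "herm_inner (s *s u) z = s * herm_inner u z"
  by (simp add: herm_inner_def algebra_simps sum_distrib_left)

lemma herm_inner_smult_right: "herm_inner u (s *s z) = cnj s * herm_inner u z"
  by (simp add: herm_inner_def algebra_simps sum_distrib_left)

lemma herm_inner_zero [simp]: "herm_inner 0 z = 0" "herm_inner z 0 = 0"
  by (simp_all add: herm_inner_def)

lemma herm_inner_commute: "herm_inner u z = cnj (herm_inner z u)"
  by (simp add: herm_inner_def mult.commute)

lemma herm_inner_self_eq_0_iff: "herm_inner u u = 0 \<longleftrightarrow> u = 0"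
proof
  assume "herm_inner u u = 0"
  moreover have "herm_inner u u = of_real (\<Sum>y\<in>UNIV. (cmod (u $ y))\<^sup>2)"
    unfolding herm_inner_def of_real_sum by (rule sum.cong) (auto simp only: complex_norm_square)
  ultimately have "(\<Sum>y\<in>UNIV. (cmod (u $ y))\<^sup>2) = 0"
    by (metis of_real_eq_0_iff)
  then show "u = 0"
    by (simp add: sum_nonneg_eq_0_iff vec_eq_iff)
qed simp

lemma strongly_regular_simple_graph: "strongly_regular adj n k a c \<Longrightarrow> simple_graph adj"
  by (simp add: strongly_regular_def)

lemma connected_srg_common_neighbour:
  fixes adj :: "'n::finite \<Rightarrow> 'n \<Rightarrow> bool"
  assumes srg: "strongly_regular adj n k a c" and conn: "connected_graph adj"
    and "y \<noteq> x" "\<not> adj x y"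
  shows "\<exists>z. adj x z \<and> adj z y"
proof -
  have sg: "simple_graph adj"
    using srg by (rule strongly_regular_simple_graph)
  have card_common: "card {z. adj x z \<and> adj q z} = c" if "q \<noteq> x" "\<not> adj x q" for q
    using srg that by (auto simp: strongly_regular_def)
  have "c \<noteq> 0"
  proof
    assume "c = 0"
    \<comment> \<open>then no walk leaves the closed neighbourhood of x\<close>
    have "q = x \<or> adj x q" if "adj\<^sup>*\<^sup>* x q" for q
      using that
    proof (induction rule: rtranclp_induct)
      case (step p q)
      show ?case
      proof (rule ccontr)
        assume far: "\<not> (q = x \<or> adj x q)"
        with step have "p \<in> {z. adj x z \<and> adj q z}"
          using sg by (auto simp: simple_graph_def)
        then have "card {z. adj x z \<and> adj q z} \<noteq> 0"
          by (auto simp: card_eq_0_iff)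
        with far card_common \<open>c = 0\<close> show False
          by auto
      qed
    qed simp
    moreover have "adj\<^sup>*\<^sup>* x y"
      using conn by (simp add: connected_graph_def)
    ultimately show False
      using assms(3,4) by blast
  qed
  then have "{z. adj x z \<and> adj y z} \<noteq> {}"
    using card_common[OF assms(3,4)] by (metis card.empty)
  then show ?thesis
    using sg by (auto simp: simple_graph_def)
qed

lemma connected_srg_graph_dist:
  fixes adj :: "'n::finite \<Rightarrow> 'n \<Rightarrow> bool"
  assumes srg: "strongly_regular adj n k a c" and conn: "connected_graph adj"
  shows "graph_dist adj x y = (if y = x then 0 else if adj x y then 1 else 2)"
proof -
  consider "y = x" | "y \<noteq> x" "adj x y" | "y \<noteq> x" "\<not> adj x y"
    by blast
  then show ?thesis
  proof cases
    case 1
    then show ?thesis by (simp add: graph_dist_def)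
  next
    case 2
    then have "(LEAST m. (adj ^^ m) x y) = 1"
      by (intro Least_equality) (auto intro!: Suc_leI gr0I)
    with 2 show ?thesis by (simp add: graph_dist_def)
  next
    case 3
    then obtain z where "adj x z" "adj z y"
      using connected_srg_common_neighbour[OF srg conn] by blast
    then have "(adj ^^ 2) x y"
      by (auto simp: numeral_2_eq_2 relcompp_apply)
    have "(LEAST m. (adj ^^ m) x y) = 2"
    proof (rule Least_equality)
      fix m
      assume "(adj ^^ m) x y"
      with 3 show "2 \<le> m"
        by (cases m; cases "m - 1") auto
    qed fact
    with 3 show ?thesis by (simp add: graph_dist_def)
  qed
qed

lemma adj_matrix_mult_component:
  "(adj_matrix adj *v u) $ y = (\<Sum>z\<in>UNIV. if adj y z then u $ z else 0)"
  by (auto simp: adj_matrix_def matrix_vector_mult_def intro!: sum.cong)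

lemma dual_idem_mult_component:
  "(dual_idem adj x j *v u) $ y = (if graph_dist adj x y = j then u $ y else 0)"
proof -
  have "(dual_idem adj x j *v u) $ y
      = (\<Sum>z\<in>UNIV. if z = y then (if graph_dist adj x y = j then u $ y else 0) else 0)"
    unfolding dual_idem_def matrix_vector_mult_def by (rule trans[OF vec_lambda_beta], rule sum.cong) auto
  then show ?thesis
    by simp
qed

lemma herm_inner_dual_idem_orthogonal:
  "j \<noteq> l \<Longrightarrow> herm_inner (dual_idem adj x j *v u) (dual_idem adj x l *v z) = 0"
  by (auto simp: herm_inner_def dual_idem_mult_component intro!: sum.neutral)

lemma herm_inner_adj_matrix_commute:
  assumes "simple_graph adj"
  shows "herm_inner (adj_matrix adj *v u) z = herm_inner u (adj_matrix adj *v z)"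
proof -
  have "herm_inner (adj_matrix adj *v u) z
      = (\<Sum>y\<in>UNIV. \<Sum>t\<in>UNIV. if adj y t then u $ t * cnj (z $ y) else 0)"
    by (simp add: herm_inner_def adj_matrix_mult_component sum_distrib_right) (auto intro!: sum.cong)
  also have "\<dots> = (\<Sum>t\<in>UNIV. \<Sum>y\<in>UNIV. if adj y t then u $ t * cnj (z $ y) else 0)"
    by (rule sum.swap)
  also have "\<dots> = herm_inner u (adj_matrix adj *v z)"
    using assms by (auto simp: herm_inner_def adj_matrix_mult_component sum_distrib_left
        simple_graph_def intro!: sum.cong)
  finally show ?thesis .
qed

lemma adj_matrix_square_component:
  assumes "simple_graph adj"
  shows "(adj_matrix adj *v (adj_matrix adj *v u)) $ y
    = (\<Sum>t\<in>UNIV. of_nat (card {z. adj y z \<and> adj t z}) * u $ t)"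
proof -
  have "(adj_matrix adj *v (adj_matrix adj *v u)) $ y
      = (\<Sum>z\<in>UNIV. \<Sum>t\<in>UNIV. if adj y z \<and> adj z t then u $ t else 0)"
    by (auto simp: adj_matrix_mult_component sum_distrib_left intro!: sum.cong)
  also have "\<dots> = (\<Sum>t\<in>UNIV. \<Sum>z\<in>UNIV. if adj y z \<and> adj t z then u $ t else 0)"
    using assms by (subst sum.swap) (simp add: simple_graph_def)
  also have "\<dots> = (\<Sum>t\<in>UNIV. of_nat (card {z. adj y z \<and> adj t z}) * u $ t)"
    by (simp add: sum.If_cases)
  finally show ?thesis .
qed

lemma srg_adj_matrix_square:
  fixes adj :: "'n::finite \<Rightarrow> 'n \<Rightarrow> bool"
  assumes srg: "strongly_regular adj n k a c"
  shows "adj_matrix adj *v (adj_matrix adj *v u)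
    = (of_nat k - of_nat c) *s u + (of_nat a - of_nat c) *s (adj_matrix adj *v u)
      + (of_nat c * (\<Sum>t\<in>UNIV. u $ t)) *s (\<chi> y. 1)"
proof (subst vec_eq_iff, intro allI)
  fix y
  have sg: "simple_graph adj"
    using srg by (rule strongly_regular_simple_graph)
  have card_common: "card {z. adj y z \<and> adj t z} = (if t = y then k else if adj y t then a else c)" for t
    using srg unfolding strongly_regular_def by (cases "t = y"; cases "adj y t") auto
  have "\<not> adj y y"
    using sg by (simp add: simple_graph_def)
  then have "of_nat (card {z. adj y z \<and> adj t z}) * u $ t
      = (of_nat k - of_nat c) * (if t = y then u $ t else 0)
        + (of_nat a - of_nat c) * (if adj y t then u $ t else 0) + of_nat c * u $ t" for t
    by (auto simp: card_common algebra_simps)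
  then have "(adj_matrix adj *v (adj_matrix adj *v u)) $ y
      = (\<Sum>t\<in>UNIV. (of_nat k - of_nat c) * (if t = y then u $ t else 0)
          + (of_nat a - of_nat c) * (if adj y t then u $ t else 0) + of_nat c * u $ t)"
    unfolding adj_matrix_square_component[OF sg] by (rule sum.cong[OF refl])
  also have "\<dots> = (of_nat k - of_nat c) * u $ y
      + (of_nat a - of_nat c) * (\<Sum>t\<in>UNIV. if adj y t then u $ t else 0)
      + of_nat c * (\<Sum>t\<in>UNIV. u $ t)"
    by (simp add: sum.distrib flip: sum_distrib_left)
  finally show "(adj_matrix adj *v (adj_matrix adj *v u)) $ y
    = ((of_nat k - of_nat c) *s u + (of_nat a - of_nat c) *s (adj_matrix adj *v u)
      + (of_nat c * (\<Sum>t\<in>UNIV. u $ t)) *s (\<chi> y. 1)) $ y"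
    by (simp add: adj_matrix_mult_component algebra_simps)
qed

definition pair_span :: "'a::semiring_1^'n \<Rightarrow> 'a^'n \<Rightarrow> ('a^'n) set" where
  "pair_span v w = {\<alpha> *s v + \<beta> *s w | \<alpha> \<beta>. True}"

lemma pair_span_iff: "u \<in> pair_span v w \<longleftrightarrow> (\<exists>\<alpha> \<beta>. u = \<alpha> *s v + \<beta> *s w)"
  by (simp add: pair_span_def)

text \<open>If w = 0 the second coordinate is the junk value 0 (division by 0), which is harmless
  exactly when w' = 0 as well.\<close>
definition pair_map ::
  "complex^'n::finite \<Rightarrow> complex^'n \<Rightarrow> complex^'m \<Rightarrow> complex^'m \<Rightarrow> complex^'n \<Rightarrow> complex^'m"
  where "pair_map v w v' w' u
    = (herm_inner u v / herm_inner v v) *s v' + (herm_inner u w / herm_inner w w) *s w'"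

lemma pair_map_add: "pair_map v w v' w' (u + z) = pair_map v w v' w' u + pair_map v w v' w' z"
  by (simp add: pair_map_def herm_inner_add_left vec_eq_iff add_divide_distrib algebra_simps)

lemma pair_map_smult: "pair_map v w v' w' (s *s u) = s *s pair_map v w v' w' u"
  by (simp add: pair_map_def herm_inner_smult_left vec_eq_iff algebra_simps)

lemma pair_map_lincomb:
  assumes "herm_inner v w = 0" "v \<noteq> 0" "w = 0 \<Longrightarrow> w' = 0"
  shows "pair_map v w v' w' (\<alpha> *s v + \<beta> *s w) = \<alpha> *s v' + \<beta> *s w'"
proof -
  have "herm_inner w v = 0"
    using assms(1) herm_inner_commute by (metis complex_cnj_zero)
  then show ?thesis
    using assms by (cases "w = 0")
      (simp_all add: pair_map_def herm_inner_add_left herm_inner_smult_left herm_inner_self_eq_0_iff)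
qed

lemma bij_betw_pair_map:
  assumes "herm_inner v w = 0" "herm_inner v' w' = 0" "v \<noteq> 0" "v' \<noteq> 0" "w = 0 \<longleftrightarrow> w' = 0"
  shows "bij_betw (pair_map v w v' w') (pair_span v w) (pair_span v' w')"
proof -
  have "pair_map v w v' w' (\<alpha> *s v + \<beta> *s w) = \<alpha> *s v' + \<beta> *s w'"
    and "pair_map v' w' v w (\<alpha> *s v' + \<beta> *s w') = \<alpha> *s v + \<beta> *s w" for \<alpha> \<beta>
    using pair_map_lincomb[where v = v and w = w and v' = v' and w' = w']
      pair_map_lincomb[where v = v' and w = w' and v' = v and w' = w] assms by auto
  then show ?thesis
    by (intro bij_betw_byWitness[where f' = "pair_map v' w' v w"]) (fastforce simp: pair_span_def)+
qed

locale local_eigenvector =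
  fixes adj :: "'n::finite \<Rightarrow> 'n \<Rightarrow> bool" and n k a c :: nat and x :: 'n and i :: nat
    and v :: "complex^'n" and mu :: complex
  assumes srg: "strongly_regular adj n k a c" and conn: "connected_graph adj"
    and layer: "i \<in> {1, 2}"
    and v_in: "dual_idem adj x i *v v = v"
    and v_eig: "(dual_idem adj x i ** adj_matrix adj ** dual_idem adj x i) *v v = mu *s v"
    and v_orth: "herm_inner (\<chi> y. 1) v = 0"
begin

abbreviation "A \<equiv> adj_matrix adj"

definition w :: "complex^'n" where
  "w = A *v v - mu *s v"

definition f :: complex where
  "f = of_nat k - of_nat c + (of_nat a - of_nat c) * mu - mu\<^sup>2"

lemma graph_dist_from_x: "graph_dist adj x y = (if y = x then 0 else if adj x y then 1 else 2)"
  using connected_srg_graph_dist[OF srg conn] .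

lemma other_layer_ne: "3 - i \<noteq> i" "3 - i \<noteq> 0"
  using layer by auto

lemma v_eq_0_off_layer: "graph_dist adj x y \<noteq> i \<Longrightarrow> v $ y = 0"
  using arg_cong[OF v_in, of "\<lambda>u. u $ y"] by (simp add: dual_idem_mult_component)

lemma sum_v_eq_0: "(\<Sum>y\<in>UNIV. v $ y) = 0"
proof -
  have "(\<Sum>y\<in>UNIV. cnj (v $ y)) = 0"
    using v_orth by (simp add: herm_inner_def)
  then show ?thesis
    by (metis complex_cnj_zero_iff cnj_sum)
qed

lemma adj_matrix_v_on_layer: "graph_dist adj x y = i \<Longrightarrow> (A *v v) $ y = mu * v $ y"
  using arg_cong[OF v_eig, of "\<lambda>u. u $ y"] v_in
  by (simp add: matrix_vector_mul_assoc[symmetric] dual_idem_mult_component)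

lemma adj_matrix_v_at_x: "(A *v v) $ x = 0"
proof -
  \<comment> \<open>the neighbours of x are exactly the first layer\<close>
  have "(if adj x z then v $ z else 0) = (if i = 1 then v $ z else 0)" for z
    using v_eq_0_off_layer[of z] layer strongly_regular_simple_graph[OF srg]
    by (auto simp: graph_dist_from_x simple_graph_def)
  then have "(A *v v) $ x = (if i = 1 then \<Sum>z\<in>UNIV. v $ z else 0)"
    by (simp add: adj_matrix_mult_component)
  then show ?thesis
    by (simp add: sum_v_eq_0)
qed

lemma w_eq_dual_idem: "w = dual_idem adj x (3 - i) *v (A *v v)"
proof (subst vec_eq_iff, intro allI)
  fix y
  have "graph_dist adj x y = i \<or> y = x \<and> v $ y = 0 \<or> graph_dist adj x y = 3 - i \<and> v $ y = 0"
    using layer v_eq_0_off_layer[of y] by (cases "y = x"; cases "adj x y") (auto simp: graph_dist_from_x)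
  then consider "graph_dist adj x y = i" | "y = x" "v $ y = 0" | "graph_dist adj x y = 3 - i" "v $ y = 0"
    by blast
  then show "w $ y = (dual_idem adj x (3 - i) *v (A *v v)) $ y"
    by cases (use other_layer_ne in \<open>auto simp: w_def dual_idem_mult_component adj_matrix_v_on_layer
        adj_matrix_v_at_x v_eq_0_off_layer graph_dist_from_x\<close>)
qed

lemma dual_idem_v: "dual_idem adj x j *v v = (if j = i then v else 0)"
  using v_eq_0_off_layer by (auto simp: vec_eq_iff dual_idem_mult_component)

lemma dual_idem_w: "dual_idem adj x j *v w = (if j = 3 - i then w else 0)"
  unfolding w_eq_dual_idem by (auto simp: vec_eq_iff dual_idem_mult_component)

lemma herm_inner_v_w: "herm_inner v w = 0"
  using herm_inner_dual_idem_orthogonal[OF other_layer_ne(1)[symmetric]]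
  by (metis v_in w_eq_dual_idem)

lemma adj_matrix_v: "A *v v = mu *s v + w"
  by (simp add: w_def)

lemma adj_matrix_w: "A *v w = f *s v + (of_nat a - of_nat c - mu) *s w"
proof -
  have "A *v w = A *v (A *v v) - mu *s (A *v v)"
    by (simp add: w_def matrix_vector_mult_diff_distrib matrix_vector_mult_smult)
  also have "\<dots> = (of_nat k - of_nat c) *s v + (of_nat a - of_nat c) *s (mu *s v + w)
      - mu *s (mu *s v + w)"
    by (simp only: srg_adj_matrix_square[OF srg] sum_v_eq_0) (simp add: adj_matrix_v)
  also have "\<dots> = f *s v + (of_nat a - of_nat c - mu) *s w"
    by (simp add: vec_eq_iff f_def algebra_simps power2_eq_square)
  finally show ?thesis .
qed

lemma w_eq_0_iff:
  assumes "v \<noteq> 0"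
  shows "w = 0 \<longleftrightarrow> f = 0"
proof
  assume "w = 0"
  then show "f = 0"
    using adj_matrix_w assms by simp
next
  assume "f = 0"
  have "herm_inner w w = herm_inner (A *v v) w - mu * herm_inner v w"
    by (simp add: w_def herm_inner_diff_left herm_inner_smult_left)
  also have "\<dots> = herm_inner v (A *v w)"
    by (simp add: herm_inner_v_w herm_inner_adj_matrix_commute[OF strongly_regular_simple_graph[OF srg]])
  also have "\<dots> = 0"
    by (simp only: adj_matrix_w \<open>f = 0\<close> vector_smult_lzero add_0_left herm_inner_smult_right
        herm_inner_v_w mult_zero_right)
  finally show "w = 0"
    by (simp add: herm_inner_self_eq_0_iff)
qed

lemma adj_matrix_lincomb:
  "A *v (\<alpha> *s v + \<beta> *s w)
    = (\<alpha> * mu + \<beta> * f) *s v + (\<alpha> + \<beta> * (of_nat a - of_nat c - mu)) *s w"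
  unfolding matrix_vector_mult_lincomb adj_matrix_v adj_matrix_w
  by (simp add: vec_eq_iff algebra_simps)

lemma dual_idem_lincomb:
  "dual_idem adj x j *v (\<alpha> *s v + \<beta> *s w)
    = (if j = i then \<alpha> else 0) *s v + (if j = 3 - i then \<beta> else 0) *s w"
  unfolding matrix_vector_mult_lincomb dual_idem_v dual_idem_w by simp

lemma terwilliger_pair_span_closed:
  "B \<in> terwilliger adj x \<Longrightarrow> u \<in> pair_span v w \<Longrightarrow> B *v u \<in> pair_span v w"
proof (induction arbitrary: u rule: terwilliger.induct)
  case gen_A
  then show ?case
    by (metis pair_span_iff adj_matrix_lincomb)
next
  case (gen_E j)
  then show ?case
    by (metis pair_span_iff dual_idem_lincomb)
next
  case one
  then show ?case
    by simp
next
  case (add B C)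
  then obtain \<alpha> \<beta> \<gamma> \<delta> where "B *v u = \<alpha> *s v + \<beta> *s w" "C *v u = \<gamma> *s v + \<delta> *s w"
    by (meson pair_span_iff)
  then have "(B + C) *v u = (\<alpha> + \<gamma>) *s v + (\<beta> + \<delta>) *s w"
    by (simp add: matrix_vector_mult_add_rdistrib)
  then show ?case
    unfolding pair_span_iff by blast
next
  case (smult B s)
  then obtain \<alpha> \<beta> where "B *v u = \<alpha> *s v + \<beta> *s w"
    by (meson pair_span_iff)
  then have "(\<chi> i j. s * B $ i $ j) *v u = (s * \<alpha>) *s v + (s * \<beta>) *s w"
    by (simp add: smult_matrix_vector_mult)
  then show ?case
    unfolding pair_span_iff by blast
next
  case (mult B C)
  then show ?case
    by (simp add: matrix_vector_mul_assoc[symmetric])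
qed

lemma T_module_eq_pair_span: "T_module adj x v = pair_span v w"
proof
  have "v \<in> pair_span v w"
    by (auto simp: pair_span_iff intro: exI[of _ 1] exI[of _ 0])
  then show "T_module adj x v \<subseteq> pair_span v w"
    by (auto simp: T_module_def terwilliger_pair_span_closed)
next
  show "pair_span v w \<subseteq> T_module adj x v"
  proof
    fix u
    assume "u \<in> pair_span v w"
    then obtain \<alpha> \<beta> where u: "u = \<alpha> *s v + \<beta> *s w"
      by (auto simp: pair_span_iff)
    define B where "B = (\<chi> i j. \<alpha> * mat 1 $ i $ j)
      + ((\<chi> i j. \<beta> * A $ i $ j) + (\<chi> i j. (- \<beta> * mu) * mat 1 $ i $ j))"
    have "B \<in> terwilliger adj x"
      unfolding B_def by (intro terwilliger.add terwilliger.smult terwilliger.one terwilliger.gen_A)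
    moreover have "B *v v = u"
      unfolding B_def u
      by (simp only: matrix_vector_mult_add_rdistrib smult_matrix_vector_mult matrix_vector_mul_lid)
        (simp add: w_def vec_eq_iff algebra_simps)
    ultimately show "u \<in> T_module adj x v"
      unfolding T_module_def by blast
  qed
qed

lemma T_module_layer_eigenvector:
  assumes "u \<in> T_module adj x v" and "dual_idem adj x i *v u = u"
  shows "(dual_idem adj x i ** A ** dual_idem adj x i) *v u = mu *s u"
proof -
  obtain \<alpha> \<beta> where u: "u = \<alpha> *s v + \<beta> *s w"
    using assms(1) by (auto simp: T_module_eq_pair_span pair_span_iff)
  have "u = \<alpha> *s v"
    using assms(2) other_layer_ne by (simp add: u dual_idem_lincomb)
  then show ?thesis
    by (simp add: matrix_vector_mult_smult v_eig mult.commute)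
qed

end

definition T_module_iso ::
  "('n::finite \<Rightarrow> 'n \<Rightarrow> bool) \<Rightarrow> 'n \<Rightarrow> complex^'n \<Rightarrow> ('m::finite \<Rightarrow> 'm \<Rightarrow> bool) \<Rightarrow> 'm \<Rightarrow> complex^'m
    \<Rightarrow> (complex^'n \<Rightarrow> complex^'m) \<Rightarrow> bool" where
  "T_module_iso adj x v adj' x' v' \<rho> \<longleftrightarrow>
     bij_betw \<rho> (T_module adj x v) (T_module adj' x' v') \<and>
     (\<forall>u\<in>T_module adj x v. \<forall>w\<in>T_module adj x v. \<forall>s::complex.
        \<rho> (u + w) = \<rho> u + \<rho> w \<and> \<rho> (s *s u) = s *s \<rho> u) \<and>
     (\<forall>w\<in>T_module adj x v.
        \<rho> (adj_matrix adj *v w) = adj_matrix adj' *v \<rho> w \<and>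
        (\<forall>j. \<rho> (dual_idem adj x j *v w) = dual_idem adj' x' j *v \<rho> w))"

lemma T_module_iso_of_eigenvalue_eq:
  assumes "local_eigenvector adj n k a c x i v mu" and "local_eigenvector adj' n k a c x' i v' mu"
    and "v \<noteq> 0" and "v' \<noteq> 0"
  shows "\<exists>\<rho>. T_module_iso adj x v adj' x' v' \<rho>"
proof -
  interpret L: local_eigenvector adj n k a c x i v mu by fact
  interpret R: local_eigenvector adj' n k a c x' i v' mu by fact
  \<comment> \<open>f depends only on k, a, c and mu, so L.f and R.f are the same term\<close>
  have w_eq_0_iff: "L.w = 0 \<longleftrightarrow> R.w = 0"
    using L.w_eq_0_iff R.w_eq_0_iff assms(3,4) by simp
  have \<rho>_lincomb: "pair_map v L.w v' R.w (\<alpha> *s v + \<beta> *s L.w) = \<alpha> *s v' + \<beta> *s R.w" for \<alpha> \<beta>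
    by (rule pair_map_lincomb[OF L.herm_inner_v_w assms(3)]) (simp add: w_eq_0_iff)
  have "T_module_iso adj x v adj' x' v' (pair_map v L.w v' R.w)"
    unfolding T_module_iso_def L.T_module_eq_pair_span R.T_module_eq_pair_span
  proof (intro conjI ballI allI)
    show "bij_betw (pair_map v L.w v' R.w) (pair_span v L.w) (pair_span v' R.w)"
      by (rule bij_betw_pair_map[OF L.herm_inner_v_w R.herm_inner_v_w assms(3,4) w_eq_0_iff])
  next
    fix u z s
    show "pair_map v L.w v' R.w (u + z) = pair_map v L.w v' R.w u + pair_map v L.w v' R.w z"
      by (rule pair_map_add)
    show "pair_map v L.w v' R.w (s *s u) = s *s pair_map v L.w v' R.w u"
      by (rule pair_map_smult)
  next
    fix u j
    assume "u \<in> pair_span v L.w"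
    then obtain \<alpha> \<beta> where u: "u = \<alpha> *s v + \<beta> *s L.w"
      by (auto simp: pair_span_iff)
    show "pair_map v L.w v' R.w (L.A *v u) = R.A *v pair_map v L.w v' R.w u"
      unfolding u L.adj_matrix_lincomb \<rho>_lincomb R.adj_matrix_lincomb ..
    show "pair_map v L.w v' R.w (dual_idem adj x j *v u) = dual_idem adj' x' j *v pair_map v L.w v' R.w u"
      unfolding u L.dual_idem_lincomb \<rho>_lincomb R.dual_idem_lincomb ..
  qed
  then show ?thesis
    by blast
qed

lemma eigenvalue_eq_of_T_module_iso:
  assumes "local_eigenvector adj n k a c x i v mu" and "local_eigenvector adj' n' k' a' c' x' i v' mu'"
    and "v \<noteq> 0" and iso: "T_module_iso adj x v adj' x' v' \<rho>"
  shows "mu = mu'"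
proof -
  interpret L: local_eigenvector adj n k a c x i v mu by fact
  interpret R: local_eigenvector adj' n' k' a' c' x' i v' mu' by fact
  let ?E = "dual_idem adj x i" and ?E' = "dual_idem adj' x' i"
  have bij: "bij_betw \<rho> (T_module adj x v) (T_module adj' x' v')"
    and homogeneous: "\<And>u s. u \<in> T_module adj x v \<Longrightarrow> \<rho> (s *s u) = s *s \<rho> u"
    and adj_comm: "\<And>u. u \<in> T_module adj x v \<Longrightarrow> \<rho> (L.A *v u) = R.A *v \<rho> u"
    and dual_idem_comm: "\<And>u. u \<in> T_module adj x v \<Longrightarrow> \<rho> (?E *v u) = ?E' *v \<rho> u"
    using iso by (auto simp: T_module_iso_def)
  have "v = 1 *s v + 0 *s L.w" "0 = 0 *s v + 0 *s L.w" "L.A *v v = mu *s v + 1 *s L.w"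
    by (simp_all add: L.adj_matrix_v)
  then have v_mem: "v \<in> T_module adj x v" and zero_mem: "0 \<in> T_module adj x v"
    and Av_mem: "L.A *v v \<in> T_module adj x v"
    unfolding L.T_module_eq_pair_span pair_span_iff by blast+
  have "\<rho> 0 = 0"
    using homogeneous[OF v_mem, of 0] by simp
  then have "\<rho> v \<noteq> 0"
    using bij_betw_imp_inj_on[OF bij] v_mem zero_mem assms(3) by (metis inj_onD)
  have "\<rho> v \<in> T_module adj' x' v'"
    using bij v_mem by (auto simp: bij_betw_def)
  moreover have "?E' *v \<rho> v = \<rho> v"
    using dual_idem_comm[OF v_mem] L.v_in by simp
  ultimately have "(?E' ** R.A ** ?E') *v \<rho> v = mu' *s \<rho> v"
    by (rule R.T_module_layer_eigenvector)
  moreover have "(?E' ** R.A ** ?E') *v \<rho> v = \<rho> ((?E ** L.A ** ?E) *v v)"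
    using dual_idem_comm[OF Av_mem] adj_comm[OF v_mem] \<open>?E' *v \<rho> v = \<rho> v\<close> L.v_in
    by (simp add: matrix_vector_mul_assoc[symmetric])
  ultimately have "mu *s \<rho> v = mu' *s \<rho> v"
    using L.v_eig homogeneous[OF v_mem] by simp
  then show "mu = mu'"
    using \<open>\<rho> v \<noteq> 0\<close> by simp
qed

theorem lemma5p10:
  fixes adj :: "'n::finite \<Rightarrow> 'n \<Rightarrow> bool" and adj' :: "'m::finite \<Rightarrow> 'm \<Rightarrow> bool"
    and n k a c :: nat and x :: 'n and x' :: 'm and i :: nat
    and v :: "complex^'n" and v' :: "complex^'m" and mu mu' :: complex
  assumes srg: "strongly_regular adj n k a c" and srg': "strongly_regular adj' n k a c"
    and conn: "connected_graph adj" and conn': "connected_graph adj'"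
    and i: "i \<in> {1, 2}"
    and v_in: "dual_idem adj x i *v v = v"
    and v_nz: "v \<noteq> 0"
    and v_eig: "(dual_idem adj x i ** adj_matrix adj ** dual_idem adj x i) *v v = mu *s v"
    and v_orth: "herm_inner (\<chi> y. 1) v = 0"
    and v'_in: "dual_idem adj' x' i *v v' = v'"
    and v'_nz: "v' \<noteq> 0"
    and v'_eig: "(dual_idem adj' x' i ** adj_matrix adj' ** dual_idem adj' x' i) *v v' = mu' *s v'"
    and v'_orth: "herm_inner (\<chi> y. 1) v' = 0"
  shows "mu = mu' \<longleftrightarrow>
    (\<exists>\<rho> :: complex^'n \<Rightarrow> complex^'m.
       bij_betw \<rho> (T_module adj x v) (T_module adj' x' v') \<and>
       (\<forall>u\<in>T_module adj x v. \<forall>w\<in>T_module adj x v. \<forall>s::complex.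
          \<rho> (u + w) = \<rho> u + \<rho> w \<and> \<rho> (s *s u) = s *s \<rho> u) \<and>
       (\<forall>w\<in>T_module adj x v.
          \<rho> (adj_matrix adj *v w) = adj_matrix adj' *v \<rho> w \<and>
          (\<forall>j. \<rho> (dual_idem adj x j *v w) = dual_idem adj' x' j *v \<rho> w)))"
proof -
  have L: "local_eigenvector adj n k a c x i v mu"
    using srg conn i v_in v_eig v_orth by unfold_locales
  have R: "local_eigenvector adj' n k a c x' i v' mu'"
    using srg' conn' i v'_in v'_eig v'_orth by unfold_locales
  have "mu = mu' \<longleftrightarrow> (\<exists>\<rho>. T_module_iso adj x v adj' x' v' \<rho>)"
  proof
    assume "mu = mu'"
    with R show "\<exists>\<rho>. T_module_iso adj x v adj' x' v' \<rho>"
      using T_module_iso_of_eigenvalue_eq[OF L _ v_nz v'_nz] by simp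
  next
    assume "\<exists>\<rho>. T_module_iso adj x v adj' x' v' \<rho>"
    then show "mu = mu'"
      using eigenvalue_eq_of_T_module_iso[OF L R v_nz] by blast
  qed
  then show ?thesis
    unfolding T_module_iso_def .
qed

end
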